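(* Let $G=HN$ be a finite non-Frobenius $2$-transitive affine group of degree $p^k$ ($p$ prime), with $N\cong\mathbb F_p^k$ and $H$ the stabiliser of $0$, and suppose $H\le\Gamma\mathrm L_1(p^k)$. If $\kappa(G)=2$, then $k$ is even and $|H|=2(p^k-1)$.
   Context: A derangement is an element fixing no point; $\kappa(G)$ is the number of conjugacy classes of derangements. A Frobenius group is a transitive non-regular group in which only the identity fixes more than one point. $\Gamma\mathrm L_1(p^k)=\mathbb F_{p^k}^\times\rtimes\mathrm{Gal}(\mathbb F_{p^k}/\mathbb F_p)$ acting semilinearly on $\mathbb F_{p^k}\cong\mathbb F_p^k$. *)

theory Defs
  imports "HOL-Algebra.Algebra"
begin

text \<open>Permutations of a set S are elements of BijGroup S (extensional bijections).\<close>

definition gammaL1 :: "('a, 'b) ring_scheme \<Rightarrow> ('a \<Rightarrow> 'a) set" where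
  "gammaL1 F = {restrict (\<lambda>x. a \<otimes>\<^bsub>F\<^esub> \<sigma> x) (carrier F) | a \<sigma>.
      a \<in> carrier F - {\<zero>\<^bsub>F\<^esub>} \<and> \<sigma> \<in> ring_iso F F}"

definition affine_group :: "('a, 'b) ring_scheme \<Rightarrow> ('a \<Rightarrow> 'a) set \<Rightarrow> ('a \<Rightarrow> 'a) set" where
  "affine_group F H = {restrict (\<lambda>x. h x \<oplus>\<^bsub>F\<^esub> v) (carrier F) | h v.
      h \<in> H \<and> v \<in> carrier F}"

definition derangement :: "'a set \<Rightarrow> ('a \<Rightarrow> 'a) \<Rightarrow> bool" where
  "derangement S g \<longleftrightarrow> (\<forall>x\<in>S. g x \<noteq> x)"

definition conj_class :: "('g, 'c) monoid_scheme \<Rightarrow> 'g \<Rightarrow> 'g set" where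
  "conj_class G g = {x \<otimes>\<^bsub>G\<^esub> g \<otimes>\<^bsub>G\<^esub> inv\<^bsub>G\<^esub> x | x. x \<in> carrier G}"

definition kappa :: "'a set \<Rightarrow> ('a \<Rightarrow> 'a) set \<Rightarrow> nat" where
  "kappa S G = card (conj_class ((BijGroup S)\<lparr>carrier := G\<rparr>) ` {g \<in> G. derangement S g})"

definition perm_transitive :: "'a set \<Rightarrow> ('a \<Rightarrow> 'a) set \<Rightarrow> bool" where
  "perm_transitive S G \<longleftrightarrow> (\<forall>x\<in>S. \<forall>y\<in>S. \<exists>g\<in>G. g x = y)"

definition two_transitive :: "'a set \<Rightarrow> ('a \<Rightarrow> 'a) set \<Rightarrow> bool" where
  "two_transitive S G \<longleftrightarrow> (\<forall>x\<in>S. \<forall>y\<in>S. \<forall>x'\<in>S. \<forall>y'\<in>S.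
      x \<noteq> y \<longrightarrow> x' \<noteq> y' \<longrightarrow> (\<exists>g\<in>G. g x = x' \<and> g y = y'))"

definition frobenius :: "'a set \<Rightarrow> ('a \<Rightarrow> 'a) set \<Rightarrow> bool" where
  "frobenius S G \<longleftrightarrow> perm_transitive S G
     \<and> (\<exists>g\<in>G. g \<noteq> (\<lambda>x\<in>S. x) \<and> (\<exists>x\<in>S. g x = x))
     \<and> (\<forall>g\<in>G. (\<exists>x\<in>S. \<exists>y\<in>S. x \<noteq> y \<and> g x = x \<and> g y = y) \<longrightarrow> g = (\<lambda>x\<in>S. x))"

end

theory Submission
  imports Defs
begin

text \<open>Every \<open>h \<in> H \<le> \<Gamma>L\<^sub>1\<close> has the form \<open>x \<mapsto> a \<sigma>(x)\<close>, so the stabiliser \<open>H\<^sub>1\<close> of \<open>1\<close> in \<open>H\<close>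
  consists of field automorphisms, and 2-transitivity makes \<open>H\<close> transitive on \<open>F\<^sup>\<times>\<close>; hence
  \<open>|H| = |H\<^sub>1| (p\<^sup>k - 1)\<close>. Each \<open>s \<in> H\<^sub>1\<close> fixes \<open>1\<close>, so \<open>x \<mapsto> x - s x\<close> is not surjective and some
  \<open>x \<mapsto> s x + v\<close> is a derangement. Two such derangements are conjugate in \<open>G\<close> only if their
  linear parts are conjugate in \<open>H\<close>, and conjugation by \<open>x \<mapsto> a \<tau>(x)\<close> fixes automorphisms because
  \<open>Aut(F)\<close> is abelian; so \<open>\<kappa>(G) \<ge> |H\<^sub>1|\<close>. If \<open>H\<^sub>1 = 1\<close>, then \<open>H\<close> is regular on \<open>F\<^sup>\<times>\<close>, the derangements
  are the nontrivial translations, and these form a single class, so \<open>\<kappa>(G) \<le> 1\<close>. Thus \<open>\<kappa>(G) = 2\<close>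
  forces \<open>|H\<^sub>1| = 2\<close>; the nontrivial element of \<open>H\<^sub>1\<close> is an involutory automorphism, so \<open>F\<close> is
  2-dimensional over its fixed field and \<open>p\<^sup>k\<close> is a square.\<close>

lemma (in cring) ring_hom_cring_endo: "\<phi> \<in> ring_hom R R \<Longrightarrow> ring_hom_cring R R \<phi>"
  by (simp add: ring_hom_cring_def ring_hom_cring_axioms_def is_cring)

lemma (in field) finite_field_homs_commute:
  assumes fin: "finite (carrier R)" and f: "f \<in> ring_hom R R" and g: "g \<in> ring_hom R R"
    and x: "x \<in> carrier R"
  shows "f (g x) = g (f x)"
proof -
  interpret f: ring_hom_cring R R f using f by (rule ring_hom_cring_endo)
  interpret g: ring_hom_cring R R g using g by (rule ring_hom_cring_endo)
  obtain w where w: "w \<in> carrier R - {\<zero>}"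
    and gen: "carrier R - {\<zero>} = {w [^] i | i::nat. True}"
    using finite_field_mult_group_has_gen[OF fin] by (auto simp: nat_pow_mult_of)
  have "\<phi> w \<in> carrier R - {\<zero>}" if "\<phi> \<in> ring_hom R R" for \<phi>
  proof -
    interpret \<phi>: ring_hom_cring R R \<phi> using that by (rule ring_hom_cring_endo)
    show ?thesis
      using non_trivial_field_hom_is_inj[OF that field_axioms field_axioms] w
      by (auto dest: inj_onD[where y = \<zero>])
  qed
  then obtain m n :: nat where m: "f w = w [^] m" and n: "g w = w [^] n"
    using f g gen by blast
  show ?thesis
  proof (cases "x = \<zero>")
    case False
    then obtain i :: nat where i: "x = w [^] i" using x gen by auto
    have "f (g x) = w [^] (m * (n * i))" and "g (f x) = w [^] (n * (m * i))"
      using w by (simp_all add: i m n nat_pow_pow)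
    then show ?thesis by (simp add: mult.left_commute)
  qed simp
qed

lemma (in field) card_eq_square_card_fixed_points:
  assumes f: "f \<in> ring_hom R R" and invol: "\<And>x. x \<in> carrier R \<Longrightarrow> f (f x) = x"
    and t: "t \<in> carrier R" and ft: "f t \<noteq> t"
  shows "card (carrier R) = card {x \<in> carrier R. f x = x} ^ 2"
proof -
  interpret f: ring_hom_cring R R f using f by (rule ring_hom_cring_endo)
  define K where "K = {x \<in> carrier R. f x = x}"
  define s where "s = t \<ominus> f t"
  have ftc: "f t \<in> carrier R" using t by simp
  have s: "s \<in> carrier R" "s \<noteq> \<zero>" using t ft by (auto simp: s_def)
  have fs: "f s = \<ominus> s"
    using t invol[OF t] by (simp add: s_def a_minus_def minus_add a_comm)
  have "bij_betw (\<lambda>(a, b). a \<oplus> b \<otimes> t) (K \<times> K) (carrier R)"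
  proof (rule bij_betw_imageI)
    show "inj_on (\<lambda>(a, b). a \<oplus> b \<otimes> t) (K \<times> K)"
    proof (rule inj_onI, clarify)
      fix a b a' b' assume "a \<in> K" "b \<in> K" "a' \<in> K" "b' \<in> K"
        and eq: "a \<oplus> b \<otimes> t = a' \<oplus> b' \<otimes> t"
      then have K: "a \<in> carrier R" "b \<in> carrier R" "a' \<in> carrier R" "b' \<in> carrier R"
        and fK: "f a = a" "f b = b" "f a' = a'" "f b' = b'" by (auto simp: K_def)
      have "f (a \<oplus> b \<otimes> t) = f (a' \<oplus> b' \<otimes> t)" using eq by simp
      then have eq': "a \<oplus> b \<otimes> f t = a' \<oplus> b' \<otimes> f t" using K fK t by simp
      have "b \<otimes> s = (a \<oplus> b \<otimes> t) \<ominus> (a \<oplus> b \<otimes> f t)"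
        using K t ftc unfolding s_def by algebra
      also have "\<dots> = b' \<otimes> s"
        unfolding eq eq' using K t ftc unfolding s_def by algebra
      finally have "b = b'" using K s by (simp add: m_rcancel)
      then show "a = a' \<and> b = b'" using eq K t by simp
    qed
    show "(\<lambda>(a, b). a \<oplus> b \<otimes> t) ` (K \<times> K) = carrier R"
    proof (intro equalityI subsetI)
      show "y \<in> carrier R" if "y \<in> (\<lambda>(a, b). a \<oplus> b \<otimes> t) ` (K \<times> K)" for y
        using that t by (auto simp: K_def)
      fix x assume x: "x \<in> carrier R"
      have fxc: "f x \<in> carrier R" using x by simp
      \<comment> \<open>Applying \<open>f\<close> to \<open>x = a + b t\<close> and subtracting gives \<open>b = (x - f x) / (t - f t)\<close>.\<close>
      define b where "b = (x \<ominus> f x) \<otimes> inv s"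
      define a where "a = x \<ominus> b \<otimes> t"
      have b: "b \<in> carrier R" and bs: "b \<otimes> s = x \<ominus> f x"
        using x s by (simp_all add: b_def m_assoc field_Units)
      have fbc: "f b \<in> carrier R" using b by simp
      have "f b \<otimes> s = \<ominus> f (b \<otimes> s)" using b s fs by (simp add: r_minus)
      also have "\<dots> = b \<otimes> s"
        unfolding bs using x fxc invol[OF x] by (simp add: a_minus_def minus_add a_comm)
      finally have fb: "f b = b" using fbc b s by (simp add: m_rcancel)
      have "f a = f x \<ominus> b \<otimes> f t" using x b t fb by (simp add: a_def a_minus_def)
      also have "\<dots> = (x \<ominus> (x \<ominus> f x)) \<ominus> b \<otimes> (t \<ominus> (t \<ominus> f t))"
        using x fxc b t ftc by algebra
      also have "\<dots> = (x \<ominus> b \<otimes> s) \<ominus> b \<otimes> (t \<ominus> s)" by (simp only: bs flip: s_def)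
      also have "\<dots> = a" using x b t s unfolding a_def by algebra
      finally have "a \<in> K" "b \<in> K" using x b t fb by (simp_all add: K_def a_def)
      moreover have "x = a \<oplus> b \<otimes> t" using x b t unfolding a_def by algebra
      ultimately show "x \<in> (\<lambda>(a, b). a \<oplus> b \<otimes> t) ` (K \<times> K)" by force
    qed
  qed
  then have "card (carrier R) = card (K \<times> K)" by (simp add: bij_betw_same_card)
  then show ?thesis by (simp add: K_def card_cartesian_product power2_eq_square)
qed

lemma prime_power_square_imp_even_exponent:
  fixes p k m :: nat
  assumes p: "Factorial_Ring.prime p" and eq: "p ^ k = m ^ 2"
  shows "even k"
proof -
  have "m \<noteq> 0" using eq p by (metis power_not_zero prime_gt_0_nat zero_less_iff_neq_zero zero_power2)
  then have "k = 2 * multiplicity p m"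
    using arg_cong[OF eq, of "multiplicity p"] p by (simp add: prime_elem_multiplicity_power_distrib)
  then show ?thesis by simp
qed

lemma BijGroup_one: "\<one>\<^bsub>BijGroup S\<^esub> = (\<lambda>x\<in>S. x)"
  by (simp add: BijGroup_def)

lemma BijGroup_mult_apply:
  "f \<in> Bij S \<Longrightarrow> g \<in> Bij S \<Longrightarrow> x \<in> S \<Longrightarrow> (f \<otimes>\<^bsub>BijGroup S\<^esub> g) x = f (g x)"
  by (simp add: BijGroup_def compose_def)

lemma Bij_eqI: "f \<in> Bij S \<Longrightarrow> g \<in> Bij S \<Longrightarrow> (\<And>x. x \<in> S \<Longrightarrow> f x = g x) \<Longrightarrow> f = g"
  by (rule extensionalityI[OF Bij_imp_extensional Bij_imp_extensional])

lemma finite_Bij: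
  assumes "finite S" shows "finite (Bij S)"
proof (rule finite_subset)
  show "Bij S \<subseteq> S \<rightarrow>\<^sub>E S" by (auto simp: PiE_def Bij_imp_extensional dest: Bij_imp_funcset)
  show "finite (S \<rightarrow>\<^sub>E S)" using assms by (simp add: finite_PiE)
qed

lemma (in group) conj_class_conj_subset:
  assumes "c \<in> carrier G" "g \<in> carrier G"
  shows "conj_class G (c \<otimes> g \<otimes> inv c) \<subseteq> conj_class G g"
proof
  fix y assume "y \<in> conj_class G (c \<otimes> g \<otimes> inv c)"
  then obtain x where x: "x \<in> carrier G" and y: "y = x \<otimes> (c \<otimes> g \<otimes> inv c) \<otimes> inv x"
    unfolding conj_class_def by blast
  then have "y = (x \<otimes> c) \<otimes> g \<otimes> inv (x \<otimes> c)" using assms by (simp add: inv_mult_group m_assoc)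
  then show "y \<in> conj_class G g" unfolding conj_class_def using x assms by blast
qed

lemma (in group) conj_class_conj:
  assumes c: "c \<in> carrier G" and g: "g \<in> carrier G"
  shows "conj_class G (c \<otimes> g \<otimes> inv c) = conj_class G g"
proof
  have "g = inv c \<otimes> (c \<otimes> g \<otimes> inv c) \<otimes> inv (inv c)"
    using c g by (metis inv_closed inv_inv l_inv l_one m_assoc m_closed r_one)
  then show "conj_class G g \<subseteq> conj_class G (c \<otimes> g \<otimes> inv c)"
    using conj_class_conj_subset[of "inv c" "c \<otimes> g \<otimes> inv c"] c g by simp
qed (rule conj_class_conj_subset[OF c g])

lemma (in group) conj_class_self: "g \<in> carrier G \<Longrightarrow> g \<in> conj_class G g"
  unfolding conj_class_def by (rule CollectI, rule exI[of _ \<one>]) simp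

lemma gammaL1_E:
  assumes "h \<in> gammaL1 R"
  obtains a \<phi> where "a \<in> carrier R" "a \<noteq> \<zero>\<^bsub>R\<^esub>" "\<phi> \<in> ring_iso R R"
    "h = (\<lambda>x\<in>carrier R. a \<otimes>\<^bsub>R\<^esub> \<phi> x)"
  using assms unfolding gammaL1_def by blast

context cring
begin

lemma gammaL1_zero: "h \<in> gammaL1 R \<Longrightarrow> h \<zero> = \<zero>"
  by (elim gammaL1_E) (simp add: ring_iso_def ring_hom_cring.hom_zero[OF ring_hom_cring_endo])

lemma gammaL1_add:
  assumes "h \<in> gammaL1 R" "x \<in> carrier R" "y \<in> carrier R"
  shows "h (x \<oplus> y) = h x \<oplus> h y"
proof -
  obtain a \<phi> where "a \<in> carrier R" "\<phi> \<in> ring_hom R R" "h = (\<lambda>x\<in>carrier R. a \<otimes> \<phi> x)"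
    using assms(1) by (elim gammaL1_E) (auto simp: ring_iso_def)
  then show ?thesis using assms(2,3) by (simp add: ring_hom_add ring_hom_closed r_distr)
qed

lemma gammaL1_minus:
  assumes "h \<in> gammaL1 R" "x \<in> carrier R" "y \<in> carrier R"
  shows "h (x \<ominus> y) = h x \<ominus> h y"
proof -
  obtain a \<phi> where a: "a \<in> carrier R" and \<phi>: "\<phi> \<in> ring_hom R R"
    and h: "h = (\<lambda>x\<in>carrier R. a \<otimes> \<phi> x)"
    using assms(1) by (elim gammaL1_E) (auto simp: ring_iso_def)
  interpret \<phi>: ring_hom_cring R R \<phi> using \<phi> by (rule ring_hom_cring_endo)
  show ?thesis using a assms(2,3) by (simp add: h a_minus_def r_distr r_minus)
qed

lemma gammaL1_fixing_one:
  assumes "h \<in> gammaL1 R" "h \<one> = \<one>"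
  obtains \<phi> where "\<phi> \<in> ring_iso R R" "\<And>x. x \<in> carrier R \<Longrightarrow> h x = \<phi> x"
proof -
  obtain a \<phi> where a: "a \<in> carrier R" and \<phi>: "\<phi> \<in> ring_iso R R"
    and h: "h = (\<lambda>x\<in>carrier R. a \<otimes> \<phi> x)"
    using assms(1) by (elim gammaL1_E)
  have \<phi>h: "\<phi> \<in> ring_hom R R" using \<phi> by (simp add: ring_iso_def)
  have "a = \<one>" using assms(2) a by (simp add: h ring_hom_one[OF \<phi>h])
  then show ?thesis using that \<phi> by (simp add: h ring_hom_closed[OF \<phi>h])
qed

end

text \<open>Writing \<open>k = a \<tau>\<close>, the hypothesis at \<open>x = 1\<close> gives \<open>\<phi>\<^sub>2 a = a\<close>, hence \<open>\<tau> \<phi>\<^sub>1 = \<phi>\<^sub>2 \<tau>\<close>;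
  as \<open>Aut(F)\<close> is abelian this is \<open>\<phi>\<^sub>1 \<tau> = \<phi>\<^sub>2 \<tau>\<close>, and \<open>\<tau>\<close> is onto.\<close>
lemma (in field) gammaL1_conj_automorphism_eq:
  assumes fin: "finite (carrier R)" and k: "k \<in> gammaL1 R"
    and \<phi>1: "\<phi>1 \<in> ring_hom R R" and \<phi>2: "\<phi>2 \<in> ring_hom R R"
    and conj: "\<And>x. x \<in> carrier R \<Longrightarrow> k (\<phi>1 x) = \<phi>2 (k x)"
    and y: "y \<in> carrier R"
  shows "\<phi>1 y = \<phi>2 y"
proof -
  obtain a \<tau> where a: "a \<in> carrier R" "a \<noteq> \<zero>" and \<tau>: "\<tau> \<in> ring_iso R R"
    and k_def: "k = (\<lambda>x\<in>carrier R. a \<otimes> \<tau> x)"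
    using k by (elim gammaL1_E)
  have \<tau>h: "\<tau> \<in> ring_hom R R" using \<tau> by (simp add: ring_iso_def)
  interpret \<phi>1: ring_hom_cring R R \<phi>1 using \<phi>1 by (rule ring_hom_cring_endo)
  interpret \<phi>2: ring_hom_cring R R \<phi>2 using \<phi>2 by (rule ring_hom_cring_endo)
  interpret \<tau>: ring_hom_cring R R \<tau> using \<tau>h by (rule ring_hom_cring_endo)
  have \<phi>2a: "\<phi>2 a = a" using conj[of \<one>] a by (simp add: k_def)
  obtain x where x: "x \<in> carrier R" "y = \<tau> x"
    using \<tau> y by (auto simp: ring_iso_def bij_betw_def)
  have "a \<otimes> \<tau> (\<phi>1 x) = a \<otimes> \<phi>2 (\<tau> x)" using conj[OF x(1)] x(1) a \<phi>2a by (simp add: k_def)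
  then have "\<tau> (\<phi>1 x) = \<phi>2 (\<tau> x)" using a x(1) by (simp add: m_lcancel)
  then show ?thesis using finite_field_homs_commute[OF fin \<phi>1 \<tau>h x(1)] x(2) by simp
qed

locale semilinear_affine_group = field R for R (structure) +
  fixes H :: "('a \<Rightarrow> 'a) set"
  assumes finite_carrier: "finite (carrier R)"
    and H_subgroup: "subgroup H (BijGroup (carrier R))"
    and H_semilinear: "H \<subseteq> gammaL1 R"
begin

abbreviation "BG \<equiv> BijGroup (carrier R)"
abbreviation "G \<equiv> affine_group R H"
abbreviation "G_grp \<equiv> BG\<lparr>carrier := G\<rparr>"
abbreviation "affine_map h v \<equiv> \<lambda>x\<in>carrier R. h x \<oplus> v"

definition H\<^sub>1 :: "('a \<Rightarrow> 'a) set" where "H\<^sub>1 = {h \<in> H. h \<one> = \<one>}"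

sublocale BG: group BG by (rule group_BijGroup)

lemma H_Bij: "h \<in> H \<Longrightarrow> h \<in> Bij (carrier R)"
  using subgroup.subset[OF H_subgroup] by (auto simp: BijGroup_def)

lemma H_closed: "h \<in> H \<Longrightarrow> x \<in> carrier R \<Longrightarrow> h x \<in> carrier R"
  using H_Bij Bij_imp_funcset by blast

lemma H_zero: "h \<in> H \<Longrightarrow> h \<zero> = \<zero>"
  using H_semilinear gammaL1_zero by blast

lemma H_add: "h \<in> H \<Longrightarrow> x \<in> carrier R \<Longrightarrow> y \<in> carrier R \<Longrightarrow> h (x \<oplus> y) = h x \<oplus> h y"
  using H_semilinear gammaL1_add by blast

lemma H_minus: "h \<in> H \<Longrightarrow> x \<in> carrier R \<Longrightarrow> y \<in> carrier R \<Longrightarrow> h (x \<ominus> y) = h x \<ominus> h y"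
  using H_semilinear gammaL1_minus by blast

lemma H_mult_apply: "h \<in> H \<Longrightarrow> g \<in> H \<Longrightarrow> x \<in> carrier R \<Longrightarrow> (h \<otimes>\<^bsub>BG\<^esub> g) x = h (g x)"
  by (rule BijGroup_mult_apply[OF H_Bij H_Bij])

lemma one_BG_apply: "x \<in> carrier R \<Longrightarrow> \<one>\<^bsub>BG\<^esub> x = x"
  by (simp add: BijGroup_one)

lemma one_BG_in_H: "\<one>\<^bsub>BG\<^esub> \<in> H"
  using subgroup.one_closed[OF H_subgroup] .

lemma H_carrier_BG: "h \<in> H \<Longrightarrow> h \<in> carrier BG"
  using subgroup.subset[OF H_subgroup] by blast

lemma H_inv_apply: "g \<in> H \<Longrightarrow> y \<in> carrier R \<Longrightarrow> (inv\<^bsub>BG\<^esub> g) (g y) = y"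
  using H_mult_apply[OF subgroup.m_inv_closed[OF H_subgroup]] BG.l_inv[OF H_carrier_BG]
  by (metis one_BG_apply)

lemma H_nonzero:
  assumes h: "h \<in> H" and x: "x \<in> carrier R" "x \<noteq> \<zero>"
  shows "h x \<noteq> \<zero>"
proof
  assume "h x = \<zero>"
  then have "h x = h \<zero>" using H_zero[OF h] by simp
  then show False
    using x H_Bij[OF h] inj_onD[of h "carrier R" x \<zero>] by (auto simp: Bij_def bij_betw_def)
qed

lemma finite_H\<^sub>1: "finite H\<^sub>1"
  by (rule finite_subset[OF _ finite_Bij[OF finite_carrier]]) (auto simp: H\<^sub>1_def H_Bij)

lemma one_BG_in_H\<^sub>1: "\<one>\<^bsub>BG\<^esub> \<in> H\<^sub>1"
  using one_BG_in_H by (simp add: H\<^sub>1_def one_BG_apply)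

lemma H\<^sub>1_mult_closed: "s1 \<in> H\<^sub>1 \<Longrightarrow> s2 \<in> H\<^sub>1 \<Longrightarrow> s1 \<otimes>\<^bsub>BG\<^esub> s2 \<in> H\<^sub>1"
  using subgroup.m_closed[OF H_subgroup] by (simp add: H\<^sub>1_def H_mult_apply)

lemma affine_map_Bij:
  assumes h: "h \<in> H" and v: "v \<in> carrier R"
  shows "affine_map h v \<in> Bij (carrier R)"
proof -
  have "inj_on (affine_map h v) (carrier R)"
    using H_Bij[OF h] H_closed[OF h] v by (auto simp: inj_on_def Bij_def bij_betw_def)
  moreover have "affine_map h v ` carrier R \<subseteq> carrier R" using H_closed[OF h] v by auto
  ultimately show ?thesis using endo_inj_surj[OF finite_carrier] by (simp add: Bij_def bij_betw_def)
qed

lemma affine_map_in_G: "h \<in> H \<Longrightarrow> v \<in> carrier R \<Longrightarrow> affine_map h v \<in> G"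
  unfolding affine_group_def by blast

lemma G_E:
  assumes "g \<in> G"
  obtains h v where "h \<in> H" "v \<in> carrier R" "g = affine_map h v"
  using assms unfolding affine_group_def by blast

lemma affine_map_inject:
  assumes "h \<in> H" "v \<in> carrier R" "h' \<in> H" "v' \<in> carrier R"
    and eq: "affine_map h v = affine_map h' v'"
  shows "h = h' \<and> v = v'"
proof
  have "affine_map h v \<zero> = affine_map h' v' \<zero>" using eq by simp
  then show v: "v = v'" using assms(1-4) by (simp add: H_zero)
  have "h x = h' x" if "x \<in> carrier R" for x
    using fun_cong[OF eq, of x] that assms by (simp add: v H_closed)
  then show "h = h'" using Bij_eqI H_Bij assms(1,3) by blast
qed

lemma affine_map_mult:
  assumes h: "h \<in> H" "v \<in> carrier R" and h': "h' \<in> H" "v' \<in> carrier R"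
  shows "affine_map h v \<otimes>\<^bsub>BG\<^esub> affine_map h' v' = affine_map (h \<otimes>\<^bsub>BG\<^esub> h') (h v' \<oplus> v)"
proof (rule Bij_eqI)
  have hh': "h \<otimes>\<^bsub>BG\<^esub> h' \<in> H" using subgroup.m_closed[OF H_subgroup h(1) h'(1)] .
  show "affine_map h v \<otimes>\<^bsub>BG\<^esub> affine_map h' v' \<in> Bij (carrier R)"
    using BG.m_closed affine_map_Bij h h' by (simp add: BijGroup_def)
  show "affine_map (h \<otimes>\<^bsub>BG\<^esub> h') (h v' \<oplus> v) \<in> Bij (carrier R)"
    using affine_map_Bij[OF hh'] H_closed h h' by simp
  fix x assume x: "x \<in> carrier R"
  then show "(affine_map h v \<otimes>\<^bsub>BG\<^esub> affine_map h' v') x = affine_map (h \<otimes>\<^bsub>BG\<^esub> h') (h v' \<oplus> v) x"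
    using h h' H_closed[OF h(1)] H_closed[OF h'(1)]
    by (simp add: BijGroup_mult_apply[OF affine_map_Bij affine_map_Bij] H_mult_apply H_add a_assoc)
qed

lemma G_subgroup: "subgroup G BG"
proof (rule BG.subgroupI)
  show "G \<subseteq> carrier BG" using affine_map_Bij by (auto simp: BijGroup_def elim!: G_E)
  show "G \<noteq> {}" using affine_map_in_G[OF one_BG_in_H] by blast
next
  fix g1 g2 assume "g1 \<in> G" "g2 \<in> G"
  then show "g1 \<otimes>\<^bsub>BG\<^esub> g2 \<in> G"
    by (auto elim!: G_E simp: affine_map_mult H_closed intro!: affine_map_in_G subgroup.m_closed[OF H_subgroup])
next
  fix g assume "g \<in> G"
  then obtain h v where h: "h \<in> H" and v: "v \<in> carrier R" and g: "g = affine_map h v" by (rule G_E)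
  define h' where "h' = inv\<^bsub>BG\<^esub> h"
  have h': "h' \<in> H" using subgroup.m_inv_closed[OF H_subgroup h] by (simp add: h'_def)
  have "affine_map h' (\<ominus> h' v) \<otimes>\<^bsub>BG\<^esub> g = affine_map \<one>\<^bsub>BG\<^esub> \<zero>"
    using h h' v H_closed[OF h' v] H_carrier_BG[OF h] by (simp add: g affine_map_mult h'_def r_neg)
  also have "\<dots> = \<one>\<^bsub>BG\<^esub>" by (auto simp: BijGroup_one intro!: restrict_ext)
  finally have "inv\<^bsub>BG\<^esub> g = affine_map h' (\<ominus> h' v)"
    using affine_map_Bij h h' v H_closed[OF h' v] by (intro BG.inv_equality) (auto simp: g BijGroup_def)
  then show "inv\<^bsub>BG\<^esub> g \<in> G" using h' v H_closed[OF h' v] by (simp add: affine_map_in_G)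
qed

sublocale G_grp: group G_grp
  using subgroup.subgroup_is_group[OF G_subgroup BG.is_group] .

lemma finite_G: "finite G"
  using finite_subset[OF subgroup.subset[OF G_subgroup]] finite_Bij[OF finite_carrier]
  by (simp add: BijGroup_def)

lemma conj_class_G_grp: "conj_class G_grp g = {c \<otimes>\<^bsub>BG\<^esub> g \<otimes>\<^bsub>BG\<^esub> inv\<^bsub>BG\<^esub> c | c. c \<in> G}"
  unfolding conj_class_def using BG.m_inv_consistent[OF G_subgroup] by force

lemma H_transitive_on_units:
  assumes "two_transitive (carrier R) G" and "y \<in> carrier R" and "y \<noteq> \<zero>"
  shows "\<exists>h\<in>H. h \<one> = y"
proof -
  obtain g where g: "g \<in> G" "g \<zero> = \<zero>" "g \<one> = y"
    using assms unfolding two_transitive_def by (metis one_closed zero_closed zero_not_one)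
  then obtain h v where "h \<in> H" "v \<in> carrier R" "g = affine_map h v" by (elim G_E)
  with g show ?thesis by (auto simp: H_zero H_closed)
qed

lemma inj_on_minus_self_iff:
  assumes h: "h \<in> H"
  shows "inj_on (\<lambda>x. x \<ominus> h x) (carrier R) \<longleftrightarrow> (\<forall>x\<in>carrier R. h x = x \<longrightarrow> x = \<zero>)"
proof
  assume inj: "inj_on (\<lambda>x. x \<ominus> h x) (carrier R)"
  show "\<forall>x\<in>carrier R. h x = x \<longrightarrow> x = \<zero>"
  proof (intro ballI impI)
    fix x assume "x \<in> carrier R" "h x = x"
    then have "x \<ominus> h x = \<zero> \<ominus> h \<zero>" by (simp add: H_zero[OF h] a_minus_def r_neg)
    then show "x = \<zero>" using inj_onD[OF inj] \<open>x \<in> carrier R\<close> by blast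
  qed
next
  assume fix0: "\<forall>x\<in>carrier R. h x = x \<longrightarrow> x = \<zero>"
  show "inj_on (\<lambda>x. x \<ominus> h x) (carrier R)"
  proof (rule inj_onI)
    fix x y assume x: "x \<in> carrier R" and y: "y \<in> carrier R" and eq: "x \<ominus> h x = y \<ominus> h y"
    have hx: "h x \<in> carrier R" "h y \<in> carrier R" using H_closed[OF h] x y by auto
    have "(x \<ominus> y) \<ominus> h (x \<ominus> y) = (x \<ominus> h x) \<ominus> (y \<ominus> h y)"
      using x y hx by (simp add: H_minus[OF h]) algebra
    also have "\<dots> = \<zero>" unfolding eq using y hx by simp
    finally have "h (x \<ominus> y) = x \<ominus> y" using x y H_closed[OF h] r_right_minus_eq by (metis minus_closed)
    then show "x = y" using fix0 x y r_right_minus_eq by (metis minus_closed)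
  qed
qed

lemma ex_derangement_iff_nonzero_fixed_point:
  assumes h: "h \<in> H"
  shows "(\<exists>v\<in>carrier R. derangement (carrier R) (affine_map h v))
    \<longleftrightarrow> (\<exists>x\<in>carrier R. x \<noteq> \<zero> \<and> h x = x)"
proof -
  have fixed_iff: "h x \<oplus> v = x \<longleftrightarrow> v = x \<ominus> h x" if "x \<in> carrier R" "v \<in> carrier R" for x v
  proof -
    have "x \<ominus> h x = \<ominus> h x \<oplus> x" using that H_closed[OF h] by (simp add: a_minus_def a_comm)
    then show ?thesis using add.inv_solve_left[of v "h x" x] that H_closed[OF h] by metis
  qed
  have sub: "(\<lambda>x. x \<ominus> h x) ` carrier R \<subseteq> carrier R" using H_closed[OF h] by auto
  have "(\<exists>v\<in>carrier R. derangement (carrier R) (affine_map h v))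
      \<longleftrightarrow> (\<lambda>x. x \<ominus> h x) ` carrier R \<noteq> carrier R"
    using sub fixed_iff by (auto simp: derangement_def)
  also have "\<dots> \<longleftrightarrow> \<not> inj_on (\<lambda>x. x \<ominus> h x) (carrier R)"
    using endo_inj_surj[OF finite_carrier sub] finite_surj_inj[OF finite_carrier, of "\<lambda>x. x \<ominus> h x"]
    by auto
  finally show ?thesis using inj_on_minus_self_iff[OF h] by blast
qed

lemma conj_class_linear_part:
  assumes h: "h \<in> H" "v \<in> carrier R" and h': "h' \<in> H" "v' \<in> carrier R"
    and conj: "affine_map h' v' \<in> conj_class G_grp (affine_map h v)"
  obtains k where "k \<in> H" "\<And>x. x \<in> carrier R \<Longrightarrow> k (h x) = h' (k x)"
proof -
  obtain c where c: "c \<in> G" and c_conj: "affine_map h' v' = c \<otimes>\<^bsub>BG\<^esub> affine_map h v \<otimes>\<^bsub>BG\<^esub> inv\<^bsub>BG\<^esub> c"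
    using conj unfolding conj_class_G_grp by blast
  obtain k w where k: "k \<in> H" "w \<in> carrier R" and c_def: "c = affine_map k w"
    using c by (elim G_E)
  have carrier: "affine_map h v \<in> carrier BG" "affine_map h' v' \<in> carrier BG" "c \<in> carrier BG"
    using affine_map_Bij h h' k by (auto simp: c_def BijGroup_def)
  have "affine_map h' v' \<otimes>\<^bsub>BG\<^esub> c = c \<otimes>\<^bsub>BG\<^esub> affine_map h v"
    using carrier by (simp add: c_conj BG.m_assoc)
  then have "affine_map (h' \<otimes>\<^bsub>BG\<^esub> k) (h' w \<oplus> v') = affine_map (k \<otimes>\<^bsub>BG\<^esub> h) (k v \<oplus> w)"
    using h h' k by (simp add: c_def affine_map_mult)
  then have "h' \<otimes>\<^bsub>BG\<^esub> k = k \<otimes>\<^bsub>BG\<^esub> h"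
    using h h' k H_closed subgroup.m_closed[OF H_subgroup] by (metis affine_map_inject a_closed)
  then show ?thesis using that k h h' by (metis H_mult_apply)
qed

lemma H\<^sub>1_automorphism:
  assumes "s \<in> H\<^sub>1"
  obtains \<phi> where "\<phi> \<in> ring_iso R R" "\<And>x. x \<in> carrier R \<Longrightarrow> s x = \<phi> x"
  using assms H_semilinear gammaL1_fixing_one by (auto simp: H\<^sub>1_def)

lemma H\<^sub>1_eq_if_conjugate:
  assumes s1: "s1 \<in> H\<^sub>1" and s2: "s2 \<in> H\<^sub>1" and k: "k \<in> H"
    and conj: "\<And>x. x \<in> carrier R \<Longrightarrow> k (s1 x) = s2 (k x)"
  shows "s1 = s2"
proof -
  obtain \<phi>1 where \<phi>1: "\<phi>1 \<in> ring_iso R R" and s1_eq: "\<And>x. x \<in> carrier R \<Longrightarrow> s1 x = \<phi>1 x"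
    using H\<^sub>1_automorphism[OF s1] by blast
  obtain \<phi>2 where \<phi>2: "\<phi>2 \<in> ring_iso R R" and s2_eq: "\<And>x. x \<in> carrier R \<Longrightarrow> s2 x = \<phi>2 x"
    using H\<^sub>1_automorphism[OF s2] by blast
  have "s1 x = s2 x" if "x \<in> carrier R" for x
    using gammaL1_conj_automorphism_eq[OF finite_carrier, of k \<phi>1 \<phi>2 x] k H_semilinear \<phi>1 \<phi>2 conj
      H_closed[OF k] that by (auto simp: ring_iso_def s1_eq s2_eq)
  then show ?thesis using s1 s2 H_Bij by (intro Bij_eqI) (auto simp: H\<^sub>1_def)
qed

lemma card_H\<^sub>1_le_kappa: "card H\<^sub>1 \<le> kappa (carrier R) G"
proof -
  let ?D = "{g \<in> G. derangement (carrier R) g}"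
  have "\<exists>v\<in>carrier R. derangement (carrier R) (affine_map s v)" if "s \<in> H\<^sub>1" for s
    using that ex_derangement_iff_nonzero_fixed_point one_closed one_not_zero
    unfolding H\<^sub>1_def by blast
  then obtain v where v: "\<And>s. s \<in> H\<^sub>1 \<Longrightarrow> v s \<in> carrier R \<and> derangement (carrier R) (affine_map s (v s))"
    by metis
  let ?d = "\<lambda>s. affine_map s (v s)"
  have d: "?d s \<in> ?D" if "s \<in> H\<^sub>1" for s using v[OF that] that affine_map_in_G by (auto simp: H\<^sub>1_def)
  have "inj_on (\<lambda>s. conj_class G_grp (?d s)) H\<^sub>1"
  proof (rule inj_onI)
    fix s1 s2 assume s: "s1 \<in> H\<^sub>1" "s2 \<in> H\<^sub>1" and eq: "conj_class G_grp (?d s1) = conj_class G_grp (?d s2)"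
    then have "?d s2 \<in> conj_class G_grp (?d s1)" using G_grp.conj_class_self d[OF s(2)] by simp
    then obtain k where "k \<in> H" "\<And>x. x \<in> carrier R \<Longrightarrow> k (s1 x) = s2 (k x)"
      using conj_class_linear_part[of s1 "v s1" s2 "v s2"] s v by (auto simp: H\<^sub>1_def)
    then show "s1 = s2" using H\<^sub>1_eq_if_conjugate s by blast
  qed
  then have "card H\<^sub>1 = card ((\<lambda>s. conj_class G_grp (?d s)) ` H\<^sub>1)" by (simp add: card_image)
  also have "\<dots> \<le> card (conj_class G_grp ` ?D)" using d finite_G by (intro card_mono) auto
  finally show ?thesis unfolding kappa_def .
qed

lemma H\<^sub>1_involution:
  assumes "card H\<^sub>1 = 2"
  obtains \<phi> t where "\<phi> \<in> ring_hom R R" "\<And>x. x \<in> carrier R \<Longrightarrow> \<phi> (\<phi> x) = x"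
    "t \<in> carrier R" "\<phi> t \<noteq> t"
proof -
  have "card (H\<^sub>1 - {\<one>\<^bsub>BG\<^esub>}) = 1"
    using assms finite_H\<^sub>1 one_BG_in_H\<^sub>1 by (simp add: card_Diff_singleton)
  then obtain s where s_def: "H\<^sub>1 - {\<one>\<^bsub>BG\<^esub>} = {s}" by (rule card_1_singletonE)
  then have s: "s \<in> H\<^sub>1" "s \<noteq> \<one>\<^bsub>BG\<^esub>" and H\<^sub>1_eq: "H\<^sub>1 = {\<one>\<^bsub>BG\<^esub>, s}"
    using one_BG_in_H\<^sub>1 by auto
  have sH: "s \<in> H" using s(1) by (simp add: H\<^sub>1_def)
  have "s \<otimes>\<^bsub>BG\<^esub> s \<noteq> s" using H_carrier_BG[OF sH] s(2) by simp
  then have ss: "s \<otimes>\<^bsub>BG\<^esub> s = \<one>\<^bsub>BG\<^esub>" using H\<^sub>1_mult_closed[OF s(1) s(1)] H\<^sub>1_eq by blast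
  obtain \<phi> where \<phi>: "\<phi> \<in> ring_iso R R" and s_eq: "\<And>x. x \<in> carrier R \<Longrightarrow> s x = \<phi> x"
    using H\<^sub>1_automorphism[OF s(1)] by blast
  have invol: "\<phi> (\<phi> x) = x" if "x \<in> carrier R" for x
    using fun_cong[OF ss, of x] that H_closed[OF sH that]
    by (simp add: H_mult_apply[OF sH sH] s_eq one_BG_apply)
  have "s \<noteq> (\<lambda>x\<in>carrier R. x)" using s(2) by (simp add: BijGroup_one)
  then obtain t where "t \<in> carrier R" "s t \<noteq> t"
    using Bij_eqI[OF H_Bij[OF sH] id_Bij] by fastforce
  then show ?thesis using that \<phi> invol s_eq by (auto simp: ring_iso_def)
qed

end

locale transitive_semilinear_affine_group = semilinear_affine_group +
  assumes H_transitive: "\<And>y. y \<in> carrier R \<Longrightarrow> y \<noteq> \<zero> \<Longrightarrow> \<exists>h\<in>H. h \<one> = y"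
begin

lemma card_H_eq: "card H = card H\<^sub>1 * (card (carrier R) - 1)"
proof -
  let ?H = "BG\<lparr>carrier := H\<rparr>"
  interpret group_action ?H "carrier R" id
    unfolding group_action_def group_hom_def group_hom_axioms_def hom_def
    using subgroup.subgroup_is_group[OF H_subgroup BG.is_group] BG.is_group H_Bij
    by (auto simp: BijGroup_def)
  have "orbit ?H id \<one> = carrier R - {\<zero>}"
    using H_transitive H_closed H_nonzero by (auto simp: orbit_def)
  moreover have "stabilizer ?H id \<one> = H\<^sub>1"
    by (auto simp: stabilizer_def H\<^sub>1_def)
  ultimately show ?thesis
    using orbit_stabilizer_theorem[OF one_closed] finite_carrier by (simp add: order_def mult.commute)
qed

lemma H_eq_one_if_fixes_nonzero:
  assumes H\<^sub>1: "H\<^sub>1 = {\<one>\<^bsub>BG\<^esub>}"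
    and h: "h \<in> H" and x: "x \<in> carrier R" "x \<noteq> \<zero>" "h x = x"
  shows "h = \<one>\<^bsub>BG\<^esub>"
proof -
  obtain g where g: "g \<in> H" "g \<one> = x" using H_transitive x by blast
  have g': "inv\<^bsub>BG\<^esub> g \<in> H" using subgroup.m_inv_closed[OF H_subgroup g(1)] .
  have g'h: "inv\<^bsub>BG\<^esub> g \<otimes>\<^bsub>BG\<^esub> h \<in> H" using subgroup.m_closed[OF H_subgroup g' h] .
  have "(inv\<^bsub>BG\<^esub> g \<otimes>\<^bsub>BG\<^esub> h) (g \<one>) = \<one>"
    using H_inv_apply[OF g(1) one_closed] x by (simp add: g(2) H_mult_apply[OF g' h])
  then have "inv\<^bsub>BG\<^esub> g \<otimes>\<^bsub>BG\<^esub> h \<otimes>\<^bsub>BG\<^esub> g \<in> H\<^sub>1"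
    using subgroup.m_closed[OF H_subgroup g'h g(1)] by (simp add: H\<^sub>1_def H_mult_apply[OF g'h g(1)])
  then have "inv\<^bsub>BG\<^esub> g \<otimes>\<^bsub>BG\<^esub> h \<otimes>\<^bsub>BG\<^esub> g = \<one>\<^bsub>BG\<^esub>" using H\<^sub>1 by simp
  then have "inv\<^bsub>BG\<^esub> g = inv\<^bsub>BG\<^esub> g \<otimes>\<^bsub>BG\<^esub> h"
    using BG.inv_equality H_carrier_BG g(1) g'h by blast
  then show ?thesis using BG.l_cancel_one' H_carrier_BG g' h by blast
qed

lemma kappa_le_one:
  assumes H\<^sub>1: "H\<^sub>1 = {\<one>\<^bsub>BG\<^esub>}"
  shows "kappa (carrier R) G \<le> 1"
proof -
  let ?t = "affine_map \<one>\<^bsub>BG\<^esub> \<one>"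
  have t: "?t \<in> G" using affine_map_in_G[OF one_BG_in_H one_closed] .
  have "conj_class G_grp d = conj_class G_grp ?t" if d: "d \<in> G" "derangement (carrier R) d" for d
  proof -
    obtain h v where h: "h \<in> H" and v: "v \<in> carrier R" and d_def: "d = affine_map h v"
      using d(1) by (elim G_E)
    have "h = \<one>\<^bsub>BG\<^esub>"
      using ex_derangement_iff_nonzero_fixed_point[OF h] d(2) v H_eq_one_if_fixes_nonzero[OF H\<^sub>1 h]
      by (auto simp: d_def)
    then have d_eq: "d = affine_map \<one>\<^bsub>BG\<^esub> v" by (simp add: d_def)
    have "v \<noteq> \<zero>" using d(2) v by (auto simp: d_eq derangement_def one_BG_apply)
    then obtain k where k: "k \<in> H" "k \<one> = v" using H_transitive v by blast
    let ?c = "affine_map k \<zero>"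
    have c: "?c \<in> G" using affine_map_in_G[OF k(1) zero_closed] .
    \<comment> \<open>\<open>x \<mapsto> k x\<close> conjugates the translation by \<open>1\<close> to the translation by \<open>k 1 = v\<close>.\<close>
    have "?c \<otimes>\<^bsub>BG\<^esub> ?t = d \<otimes>\<^bsub>BG\<^esub> ?c"
      using k v H_carrier_BG one_BG_in_H by (simp add: d_eq affine_map_mult one_BG_apply)
    then have "d = ?c \<otimes>\<^bsub>BG\<^esub> ?t \<otimes>\<^bsub>BG\<^esub> inv\<^bsub>BG\<^esub> ?c"
      using c t d(1) subgroup.subset[OF G_subgroup] by (subst BG.inv_solve_right) auto
    then show ?thesis
      using G_grp.conj_class_conj[of ?c ?t] c t BG.m_inv_consistent[OF G_subgroup c] by simp
  qed
  then have "card (conj_class G_grp ` {g \<in> G. derangement (carrier R) g}) \<le> card {conj_class G_grp ?t}"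
    by (intro card_mono) auto
  then show ?thesis by (simp add: kappa_def)
qed

lemma card_H\<^sub>1_eq_two:
  assumes kappa: "kappa (carrier R) G = 2"
  shows "card H\<^sub>1 = 2"
proof -
  have "card H\<^sub>1 \<noteq> 0" using finite_H\<^sub>1 one_BG_in_H\<^sub>1 by auto
  moreover have "card H\<^sub>1 \<noteq> 1"
  proof
    assume "card H\<^sub>1 = 1"
    then obtain a where "H\<^sub>1 = {a}" by (rule card_1_singletonE)
    then have "H\<^sub>1 = {\<one>\<^bsub>BG\<^esub>}" using one_BG_in_H\<^sub>1 by simp
    then show False using kappa_le_one kappa by simp
  qed
  moreover have "card H\<^sub>1 \<le> 2" using card_H\<^sub>1_le_kappa kappa by simp
  ultimately show ?thesis by linarith
qed

end

theorem proposition4p9: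
  fixes F :: "('a, 'b) ring_scheme" and H :: "('a \<Rightarrow> 'a) set" and p k :: nat
  assumes "field F" and "finite (carrier F)"
    and "Factorial_Ring.prime p" and "card (carrier F) = p ^ k"
    and "subgroup H (BijGroup (carrier F))"
    and "H \<subseteq> gammaL1 F"
    and "two_transitive (carrier F) (affine_group F H)"
    and "\<not> frobenius (carrier F) (affine_group F H)"
    and "kappa (carrier F) (affine_group F H) = 2"
  shows "even k \<and> card H = 2 * (p ^ k - 1)"
proof -
  interpret semilinear_affine_group F H
    using assms(1,2,5,6) by (simp add: semilinear_affine_group_def semilinear_affine_group_axioms_def)
  interpret transitive_semilinear_affine_group F H
    using H_transitive_on_units[OF assms(7)] by unfold_locales
  have H\<^sub>1: "card H\<^sub>1 = 2" using card_H\<^sub>1_eq_two[OF assms(9)] .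
  obtain \<phi> t where \<phi>: "\<phi> \<in> ring_hom F F" "\<And>x. x \<in> carrier F \<Longrightarrow> \<phi> (\<phi> x) = x"
    and t: "t \<in> carrier F" "\<phi> t \<noteq> t"
    using H\<^sub>1_involution[OF H\<^sub>1] by blast
  have "p ^ k = card {x \<in> carrier F. \<phi> x = x} ^ 2"
    using card_eq_square_card_fixed_points[OF \<phi> t] assms(4) by simp
  then have "even k" using prime_power_square_imp_even_exponent[OF assms(3)] by blast
  moreover have "card H = 2 * (p ^ k - 1)" using card_H_eq H\<^sub>1 assms(4) by simp
  ultimately show ?thesis ..
qed

end
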